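(* Assume the General Content Request Model with the $R$-rarity condition for $R=\|\mathbf L\|_\infty$, and fix constant TTL vectors $\boldsymbol\theta\preccurlyeq\mathbf L$, $\boldsymbol\theta^s\preccurlyeq\mathbf L$. For f-TTL with these fixed TTLs, $$\lim_{n\to\infty}\frac1n\sum_{l=1}^n\mathbb 1\big(c(l)\notin\mathcal K,\ Y(l)=1\big)=0\quad\text{almost surely},$$ i.e. the fraction of requests that are hits on rare objects vanishes almost surely.
   Context: Standing model (General Content Request Model). Finitely many types $t\in[T]$; each type has a finite set $\mathcal K_t$ of recurrent objects and a countable set $\mathcal R_t$ of rare objects; $\mathcal K=\bigcup_t\mathcal K_t$, $K=|\mathcal K|$, recurrent objects labeled $1,\dots,K$. Requests arrive at times $A(l)$, $A(0)=0$, with i.i.d. inter-arrival times independent of labels, having a density that is absolutely continuous w.r.t. Lebesgue measure, with connected support and finite nonzero mean. A Markov chain $Z(l)$ on $\{1,\dots,K+T\}$, irreducible with $P(c,c)>0$ for all $c$, determines labels: $Z(l)=k\le K$ means request $l$ is for recurrent object $k$; $Z(l)=K+t$ means some rare object of type $t$ (arbitrary subject to the rarity condition). $c(l)$ is the object of request $l$. $X_{pre}(l)=\min\{A(l)-A(l'):l'<l,c(l')=c(l)\}$ ($\min\emptyset=\infty$), $\beta_t(l;R)=\mathbb 1(c(l)\in\mathcal R_t,X_{pre}(l)<R)$; $R$-rarity condition: for every $t$ and every $N_m$ with $N_m/\sqrt m\to\infty$, $\frac1{N_m}\sum_{l=m}^{m+N_m}\beta_t(l;R)\to0$ a.s. f-TTL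 with fixed TTLs $(\boldsymbol\theta,\boldsymbol\theta^s)$: deep cache, shallow cache, shadow cache (metadata only). Each object $c$ has timers $(\psi^0_c,\psi^1_c,\psi^2_c)$ decreasing at unit rate (floored at $0$); $c$ is in the deep cache while $\psi^0_c>0$, in the shallow cache while $\psi^1_c>0$, its metadata in the shadow cache while $\psi^2_c>0$. A request for $c$ of type $t$ is a hit ($Y(l)=1$) if $c$ is in the deep or shallow cache, a virtual hit if not but its metadata is in the shadow cache, and a miss otherwise ($Y(l)=0$ for virtual hits and misses); on a hit or virtual hit the timers are set to $(\theta_t,0,0)$, on a miss to $(0,\theta^s_t,\theta_t)$. *)

theory Defs
  imports "HOL-Probability.Probability"
begin

text \<open>A timer triple (psi0, psi1, psi2): deep cache, shallow cache, shadow cache.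
  Timers decrease at unit rate, floored at 0.\<close>

definition timer_decay :: "real \<Rightarrow> real \<times> real \<times> real \<Rightarrow> real \<times> real \<times> real" where
  "timer_decay d psi =
     (max 0 (fst psi - d), max 0 (fst (snd psi) - d), max 0 (snd (snd psi) - d))"

definition timer_hit :: "real \<times> real \<times> real \<Rightarrow> bool" where
  "timer_hit psi \<longleftrightarrow> fst psi > 0 \<or> fst (snd psi) > 0"

definition timer_vhit :: "real \<times> real \<times> real \<Rightarrow> bool" where
  "timer_vhit psi \<longleftrightarrow> \<not> timer_hit psi \<and> snd (snd psi) > 0"

definition timer_update :: "real \<Rightarrow> real \<Rightarrow> real \<times> real \<times> real \<Rightarrow> real \<times> real \<times> real" where
  "timer_update th ths psi =
     (if timer_hit psi \<or> timer_vhit psi then (th, 0, 0) else (0, ths, th))"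

text \<open>Timers of all objects at time A l, just before request l is processed.\<close>

primrec fttl_pre ::
  "(nat \<Rightarrow> real) \<Rightarrow> (nat \<Rightarrow> 'obj) \<Rightarrow> ('obj \<Rightarrow> nat) \<Rightarrow> (nat \<Rightarrow> real) \<Rightarrow> (nat \<Rightarrow> real)
   \<Rightarrow> nat \<Rightarrow> 'obj \<Rightarrow> real \<times> real \<times> real" where
  "fttl_pre A c otype theta thetas 0 = (\<lambda>_. (0, 0, 0))"
| "fttl_pre A c otype theta thetas (Suc l) =
     (\<lambda>x. timer_decay (A (Suc l) - A l)
            (if x = c l then timer_update (theta (otype x)) (thetas (otype x))
                               (fttl_pre A c otype theta thetas l x)
             else fttl_pre A c otype theta thetas l x))"

definition fttl_hit ::
  "(nat \<Rightarrow> real) \<Rightarrow> (nat \<Rightarrow> 'obj) \<Rightarrow> ('obj \<Rightarrow> nat) \<Rightarrow> (nat \<Rightarrow> real) \<Rightarrow> (nat \<Rightarrow> real)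
   \<Rightarrow> nat \<Rightarrow> bool" where
  "fttl_hit A c otype theta thetas l \<longleftrightarrow> timer_hit (fttl_pre A c otype theta thetas l (c l))"

definition X_pre :: "(nat \<Rightarrow> real) \<Rightarrow> (nat \<Rightarrow> 'obj) \<Rightarrow> nat \<Rightarrow> ereal" where
  "X_pre A c l =
     (if \<exists>l'<l. c l' = c l
      then ereal (Min {A l - A l' | l'. l' < l \<and> c l' = c l})
      else \<infinity>)"

definition beta_rare :: "('obj set) \<Rightarrow> (nat \<Rightarrow> real) \<Rightarrow> (nat \<Rightarrow> 'obj) \<Rightarrow> real \<Rightarrow> nat \<Rightarrow> real" where
  "beta_rare Rt A c R l = (if c l \<in> Rt \<and> X_pre A c l < ereal R then 1 else 0)"

definition rarity_condition ::
  "'w measure \<Rightarrow> nat \<Rightarrow> (nat \<Rightarrow> 'obj set) \<Rightarrow> ('w \<Rightarrow> nat \<Rightarrow> real) \<Rightarrow> ('w \<Rightarrow> nat \<Rightarrow> 'obj)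
   \<Rightarrow> real \<Rightarrow> bool" where
  "rarity_condition M T Rare A c R \<longleftrightarrow>
     (\<forall>t\<in>{1..T}. \<forall>N :: nat \<Rightarrow> nat.
        filterlim (\<lambda>m. real (N m) / sqrt (real m)) at_top sequentially \<longrightarrow>
        (AE \<omega> in M. (\<lambda>m. (1 / real (N m)) * (\<Sum>l = m..m + N m. beta_rare (Rare t) (A \<omega>) (c \<omega>) R l))
                      \<longlonglongrightarrow> 0))"

primrec mat_pow :: "nat set \<Rightarrow> (nat \<Rightarrow> nat \<Rightarrow> real) \<Rightarrow> nat \<Rightarrow> nat \<Rightarrow> nat \<Rightarrow> real" where
  "mat_pow S P 0 i j = (if i = j then 1 else 0)"
| "mat_pow S P (Suc n) i j = (\<Sum>k\<in>S. mat_pow S P n i k * P k j)"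

definition gcrm ::
  "'w measure \<Rightarrow> nat \<Rightarrow> (nat \<Rightarrow> 'obj set) \<Rightarrow> (nat \<Rightarrow> 'obj set) \<Rightarrow> ('obj \<Rightarrow> nat)
   \<Rightarrow> ('obj \<Rightarrow> nat) \<Rightarrow> ('w \<Rightarrow> nat \<Rightarrow> real) \<Rightarrow> ('w \<Rightarrow> nat \<Rightarrow> nat) \<Rightarrow> ('w \<Rightarrow> nat \<Rightarrow> 'obj) \<Rightarrow> bool"
  where
  "gcrm M T Krec Rare otype lab A Z c \<longleftrightarrow>
     (let Kall = (\<Union>t\<in>{1..T}. Krec t); K = card Kall; S = {1..K+T};
          tau = (\<lambda>l \<omega>. A \<omega> (Suc l) - A \<omega> l) in
     prob_space M \<and> T \<ge> 1
     \<comment> \<open>objects: finitely many recurrent, countably many rare ones per type\<close>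
     \<and> (\<forall>t\<in>{1..T}. finite (Krec t) \<and> countable (Rare t))
     \<and> (\<forall>t\<in>{1..T}. \<forall>x\<in>Krec t \<union> Rare t. otype x = t)
     \<and> (\<forall>t\<in>{1..T}. \<forall>t'\<in>{1..T}. Krec t \<inter> Rare t' = {})
     \<and> bij_betw lab Kall {1..K}
     \<comment> \<open>arrival times: A 0 = 0, i.i.d. nonnegative inter-arrival times with a density,
         connected support, finite nonzero mean, independent of the labels\<close>
     \<and> (\<forall>\<omega>\<in>space M. A \<omega> 0 = 0)
     \<and> prob_space.indep_vars M (\<lambda>_. borel) tau UNIV
     \<and> (\<forall>l. distr M borel (tau l) = distr M borel (tau 0))
     \<and> (AE \<omega> in M. \<forall>l. tau l \<omega> \<ge> 0)
     \<and> (\<exists>f. distributed M lborel (tau 0) f \<and> connected {x. f x > 0})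
     \<and> integrable M (tau 0) \<and> (\<integral>\<omega>. tau 0 \<omega> \<partial>M) \<noteq> 0
     \<and> (\<lambda>\<omega> l. tau l \<omega>) \<in> measurable M (Pi\<^sub>M UNIV (\<lambda>_. borel))
     \<and> (\<lambda>\<omega> l. c \<omega> l) \<in> measurable M (Pi\<^sub>M UNIV (\<lambda>_. count_space UNIV))
     \<and> (\<forall>B\<in>sets (Pi\<^sub>M UNIV (\<lambda>_. borel)). \<forall>C\<in>sets (Pi\<^sub>M UNIV (\<lambda>_. count_space UNIV)).
          measure M {\<omega>\<in>space M. (\<lambda>l. tau l \<omega>) \<in> B \<and> c \<omega> \<in> C}
          = measure M {\<omega>\<in>space M. (\<lambda>l. tau l \<omega>) \<in> B} * measure M {\<omega>\<in>space M. c \<omega> \<in> C})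
     \<comment> \<open>labels: a time-homogeneous Markov chain on S, irreducible, P(s,s) > 0\<close>
     \<and> (\<forall>l. (\<lambda>\<omega>. Z \<omega> l) \<in> measurable M (count_space UNIV))
     \<and> (\<forall>\<omega>\<in>space M. \<forall>l. Z \<omega> l \<in> S)
     \<and> (\<exists>P :: nat \<Rightarrow> nat \<Rightarrow> real.
          (\<forall>i\<in>S. \<forall>j\<in>S. P i j \<ge> 0) \<and> (\<forall>i\<in>S. (\<Sum>j\<in>S. P i j) = 1)
          \<and> (\<forall>i\<in>S. \<forall>j\<in>S. \<exists>n>0. mat_pow S P n i j > 0)
          \<and> (\<forall>i\<in>S. P i i > 0)
          \<and> (\<forall>l (xs :: nat \<Rightarrow> nat) s'.
               measure M {\<omega>\<in>space M. (\<forall>i\<le>l. Z \<omega> i = xs i) \<and> Z \<omega> (Suc l) = s'}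
               = measure M {\<omega>\<in>space M. \<forall>i\<le>l. Z \<omega> i = xs i} * P (xs l) s'))
     \<comment> \<open>the chain determines the labels\<close>
     \<and> (\<forall>\<omega>\<in>space M. \<forall>l. Z \<omega> l \<le> K \<longrightarrow> c \<omega> l \<in> Kall \<and> lab (c \<omega> l) = Z \<omega> l)
     \<and> (\<forall>\<omega>\<in>space M. \<forall>l. \<forall>t\<in>{1..T}. Z \<omega> l = K + t \<longrightarrow> c \<omega> l \<in> Rare t))"

end

theory Submission
  imports Defs "HOL-Real_Asymp.Real_Asymp"
begin

text \<open>Every f-TTL timer of an object is set only when that object is requested, to a
  value at most its TTL, and afterwards decreases at unit rate. Hence a hit on c(l) needs
  an earlier request of c(l) less than R = max L time units before, i.e. X_pre(l) < R;
  for a rare object of type t this means beta_t(l; R) = 1, so the rare hits are dominated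
  by the sum of the finitely many beta_t. The rarity condition with N(m) = m makes the
  averages of beta_t over the windows [m, 2m] vanish, and a halving argument turns
  vanishing window averages of a nonnegative sequence into vanishing Cesaro averages.\<close>

lemma sum_bound_from_windows:
  fixes b :: "nat \<Rightarrow> real" and eps :: real
  assumes nonneg: "\<And>l. 0 \<le> b l" and "1 \<le> m0"
    and window: "\<And>m. m0 \<le> m \<Longrightarrow> (\<Sum>l=m..m+m. b l) \<le> eps * real m"
  shows "(\<Sum>l=1..n. b l) \<le> (\<Sum>l=1..2*m0. b l) + eps * real n"
proof (induction n rule: less_induct)
  case (less n)
  have "0 \<le> (\<Sum>l=m0..m0+m0. b l)" by (simp add: nonneg sum_nonneg)
  also have "\<dots> \<le> eps * real m0" using window by simp
  finally have eps: "0 \<le> eps" using \<open>1 \<le> m0\<close> by (simp add: zero_le_mult_iff)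
  show ?case
  proof (cases "n \<le> 2*m0")
    case True
    then have "(\<Sum>l=1..n. b l) \<le> (\<Sum>l=1..2*m0. b l)"
      by (intro sum_mono2) (auto simp: nonneg)
    then show ?thesis using eps by (simp add: add_increasing2)
  next
    case False
    define m where "m = (n+1) div 2"
    have m: "m0 \<le> m" "1 \<le> m" "n \<le> m + m" "2*m \<le> n+1"
      using False \<open>1 \<le> m0\<close> unfolding m_def by auto
    have "{1..n} = {1..m-1} \<union> {m..n}" using m by auto
    then have "(\<Sum>l=1..n. b l) = (\<Sum>l=1..m-1. b l) + (\<Sum>l=m..n. b l)"
      by (simp add: sum.union_disjoint)
    also have "(\<Sum>l=m..n. b l) \<le> (\<Sum>l=m..m+m. b l)"
      using m by (intro sum_mono2) (auto simp: nonneg)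
    also have "\<dots> \<le> eps * real m" using window m by simp
    also have "(\<Sum>l=1..m-1. b l) \<le> (\<Sum>l=1..2*m0. b l) + eps * real (m-1)"
      using less.IH[of "m-1"] m by simp
    finally have "(\<Sum>l=1..n. b l) \<le> (\<Sum>l=1..2*m0. b l) + eps * (real (m-1) + real m)"
      by (simp add: distrib_left)
    moreover have "eps * (real (m-1) + real m) \<le> eps * real n"
      using m eps by (intro mult_left_mono) auto
    ultimately show ?thesis by simp
  qed
qed

lemma cesaro_tendsto_zero_from_windows:
  fixes b :: "nat \<Rightarrow> real"
  assumes nonneg: "\<And>l. 0 \<le> b l"
    and windows: "(\<lambda>m. (1 / real m) * (\<Sum>l=m..m+m. b l)) \<longlonglongrightarrow> 0"
  shows "(\<lambda>n. (1 / real n) * (\<Sum>l=1..n. b l)) \<longlonglongrightarrow> 0"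
proof (rule LIMSEQ_I)
  fix r :: real
  assume r: "0 < r"
  obtain m1 where m1: "\<And>m. m1 \<le> m \<Longrightarrow> \<bar>(1 / real m) * (\<Sum>l=m..m+m. b l)\<bar> < r/2"
    using LIMSEQ_D[OF windows, of "r/2"] r by auto
  define m0 where "m0 = max 1 m1"
  define C where "C = (\<Sum>l=1..2*m0. b l)"
  have "(\<Sum>l=m..m+m. b l) \<le> r/2 * real m" if "m0 \<le> m" for m
    using m1[of m] that by (simp add: m0_def field_simps)
  then have bound: "(\<Sum>l=1..n. b l) \<le> C + r/2 * real n" for n
    unfolding C_def by (intro sum_bound_from_windows[OF nonneg]) (auto simp: m0_def)
  obtain n0 :: nat where n0: "2 * C / r < real n0" using reals_Archimedean2 by blast
  have "\<bar>(1 / real n) * (\<Sum>l=1..n. b l)\<bar> < r" if "n0 < n" for n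
  proof -
    have "2 * C / r < real n" using n0 that by linarith
    then have "C < r/2 * real n" using r by (simp add: field_simps)
    then have "(\<Sum>l=1..n. b l) < r * real n" using bound[of n] by linarith
    moreover have "0 \<le> (\<Sum>l=1..n. b l)" by (simp add: nonneg sum_nonneg)
    ultimately show ?thesis using that by (simp add: field_simps)
  qed
  then show "\<exists>n0. \<forall>n\<ge>n0. norm ((1 / real n) * (\<Sum>l=1..n. b l) - 0) < r"
    by (intro exI[of _ "Suc n0"]) auto
qed

lemma cesaro_tendsto_zero_if_dominated:
  fixes f :: "nat \<Rightarrow> real" and g :: "'i \<Rightarrow> nat \<Rightarrow> real"
  assumes "finite I" and f_nonneg: "\<And>l. 0 \<le> f l"
    and dominated: "\<And>l. f l \<le> (\<Sum>t\<in>I. g t l)"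
    and windows: "\<And>t. t \<in> I \<Longrightarrow> (\<lambda>m. (1 / real m) * (\<Sum>l=m..m+m. g t l)) \<longlonglongrightarrow> 0"
  shows "(\<lambda>n. (1 / real n) * (\<Sum>l=1..n. f l)) \<longlonglongrightarrow> 0"
proof (rule cesaro_tendsto_zero_from_windows[OF f_nonneg])
  let ?window = "\<lambda>h m. (1 / real m) * (\<Sum>l=m..m+m. h l)"
  have "(\<lambda>m. \<Sum>t\<in>I. ?window (g t) m) \<longlonglongrightarrow> (\<Sum>t\<in>I. 0)"
    by (intro tendsto_sum windows)
  moreover have "(\<Sum>t\<in>I. ?window (g t) m) = ?window (\<lambda>l. \<Sum>t\<in>I. g t l) m" for m
    by (simp add: sum_distrib_left sum.swap[of _ I])
  ultimately have upper: "(\<lambda>m. ?window (\<lambda>l. \<Sum>t\<in>I. g t l) m) \<longlonglongrightarrow> 0"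
    by simp
  have "0 \<le> ?window f m" for m
    by (simp add: f_nonneg sum_nonneg)
  moreover have "?window f m \<le> ?window (\<lambda>l. \<Sum>t\<in>I. g t l) m" for m
    by (intro mult_left_mono sum_mono dominated) simp
  ultimately show "(\<lambda>m. ?window f m) \<longlonglongrightarrow> 0"
    by (intro tendsto_sandwich[OF _ _ tendsto_const upper] always_eventually allI)
qed

definition timer_explained :: "(nat \<Rightarrow> real) \<Rightarrow> (nat \<Rightarrow> 'obj) \<Rightarrow> real \<Rightarrow> nat \<Rightarrow> 'obj \<Rightarrow> real \<Rightarrow> bool"
  where "timer_explained A c V l x y \<longleftrightarrow> y \<le> 0 \<or> (\<exists>l'<l. c l' = x \<and> y + (A l - A l') \<le> V)"

lemma timer_explained_decay:
  assumes "timer_explained A c V l x y" "A l \<le> A (Suc l)"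
  shows "timer_explained A c V (Suc l) x (max 0 (y - (A (Suc l) - A l)))"
  using assms unfolding timer_explained_def by (auto simp: max_def less_Suc_eq)

lemma timer_explained_request:
  assumes "y \<le> V" "A l \<le> A (Suc l)" "c l = x"
  shows "timer_explained A c V (Suc l) x (max 0 (y - (A (Suc l) - A l)))"
  using assms unfolding timer_explained_def
  by (cases "y \<le> A (Suc l) - A l") (auto simp: max_def intro!: exI[of _ l])

lemma fttl_pre_timers_explained:
  fixes theta thetas :: "nat \<Rightarrow> real" and otype :: "'obj \<Rightarrow> nat"
  assumes mono: "\<And>l. A l \<le> A (Suc l)"
  defines "V x \<equiv> max 0 (max (theta (otype x)) (thetas (otype x)))"
  shows "timer_explained A c (V x) l x (fst (fttl_pre A c otype theta thetas l x))
       \<and> timer_explained A c (V x) l x (fst (snd (fttl_pre A c otype theta thetas l x)))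
       \<and> timer_explained A c (V x) l x (snd (snd (fttl_pre A c otype theta thetas l x)))"
proof (induction l)
  case 0
  then show ?case by (simp add: timer_explained_def)
next
  case (Suc l)
  show ?case
  proof (cases "x = c l")
    case True
    define u where "u = timer_update (theta (otype x)) (thetas (otype x)) (fttl_pre A c otype theta thetas l x)"
    have "fst u \<le> V x" "fst (snd u) \<le> V x" "snd (snd u) \<le> V x"
      unfolding u_def timer_update_def V_def by auto
    moreover have "fttl_pre A c otype theta thetas (Suc l) x = timer_decay (A (Suc l) - A l) u"
      using True by (simp add: u_def)
    ultimately show ?thesis
      using timer_explained_request[of _ "V x" A l c x, OF _ mono True[symmetric]]
      by (simp add: timer_decay_def)
  next
    case False
    with Suc.IH show ?thesis by (simp add: timer_decay_def timer_explained_decay mono)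
  qed
qed

lemma fttl_hit_X_pre_less:
  assumes mono: "\<And>l. A l \<le> A (Suc l)"
    and hit: "fttl_hit A c otype theta thetas l"
    and ttl_le: "max 0 (max (theta (otype (c l))) (thetas (otype (c l)))) \<le> R"
  shows "X_pre A c l < ereal R"
proof -
  let ?p = "fttl_pre A c otype theta thetas l (c l)"
  have "fst ?p > 0 \<or> fst (snd ?p) > 0"
    using hit by (simp add: fttl_hit_def timer_hit_def)
  with fttl_pre_timers_explained[where A=A and c=c and x="c l", OF mono] ttl_le
  obtain l' where l': "l' < l" "c l' = c l" "A l - A l' < R"
    unfolding timer_explained_def by (smt (verit))
  then have "Min {A l - A l' | l'. l' < l \<and> c l' = c l} \<le> A l - A l'"
    by (intro Min_le) auto
  with l' show ?thesis unfolding X_pre_def by auto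
qed

lemma gcrm_arrivals_mono:
  assumes "gcrm M T Krec Rare otype lab A Z c"
  shows "AE \<omega> in M. \<forall>l. A \<omega> l \<le> A \<omega> (Suc l)"
proof -
  have "AE \<omega> in M. \<forall>l. A \<omega> (Suc l) - A \<omega> l \<ge> 0"
    using assms unfolding gcrm_def Let_def by (elim conjE) assumption
  then show ?thesis by eventually_elim simp
qed

lemma gcrm_nonrecurrent_request_rare:
  assumes "gcrm M T Krec Rare otype lab A Z c" "\<omega> \<in> space M"
    and "c \<omega> l \<notin> (\<Union>t\<in>{1..T}. Krec t)"
  obtains t where "t \<in> {1..T}" "c \<omega> l \<in> Rare t" "otype (c \<omega> l) = t"
proof -
  define K where "K = card (\<Union>t\<in>{1..T}. Krec t)"
  note G = assms(1)[unfolded gcrm_def Let_def, folded K_def]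
  have otype: "\<forall>t\<in>{1..T}. \<forall>x\<in>Krec t \<union> Rare t. otype x = t"
    using G by (elim conjE) assumption
  have range: "\<forall>\<omega>\<in>space M. \<forall>l. Z \<omega> l \<in> {1..K+T}"
    using G by (elim conjE) assumption
  have recurrent: "\<forall>\<omega>\<in>space M. \<forall>l. Z \<omega> l \<le> K \<longrightarrow> c \<omega> l \<in> (\<Union>t\<in>{1..T}. Krec t)"
    using G by (elim conjE) meson
  have rare: "\<forall>\<omega>\<in>space M. \<forall>l. \<forall>t\<in>{1..T}. Z \<omega> l = K + t \<longrightarrow> c \<omega> l \<in> Rare t"
    using G by (elim conjE) assumption
  have "Z \<omega> l \<in> {1..K+T}" "\<not> Z \<omega> l \<le> K"
    using range recurrent assms(2,3) by blast+
  then have t: "Z \<omega> l - K \<in> {1..T}" "Z \<omega> l = K + (Z \<omega> l - K)" by auto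
  then have "c \<omega> l \<in> Rare (Z \<omega> l - K)"
    using rare assms(2) by blast
  with t(1) otype show thesis by (intro that) auto
qed

lemma gcrm_rare_hit_le_sum_beta_rare:
  assumes model: "gcrm M T Krec Rare otype lab A Z c" and "\<omega> \<in> space M"
    and mono: "\<forall>l. A \<omega> l \<le> A \<omega> (Suc l)"
    and ttl_le: "\<forall>t\<in>{1..T}. max 0 (max (theta t) (thetas t)) \<le> R"
  shows "(if c \<omega> l \<notin> (\<Union>t\<in>{1..T}. Krec t) \<and> fttl_hit (A \<omega>) (c \<omega>) otype theta thetas l
          then 1 else 0 :: real) \<le> (\<Sum>t\<in>{1..T}. beta_rare (Rare t) (A \<omega>) (c \<omega>) R l)"
proof (cases "c \<omega> l \<notin> (\<Union>t\<in>{1..T}. Krec t) \<and> fttl_hit (A \<omega>) (c \<omega>) otype theta thetas l")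
  case True
  then obtain t where t: "t \<in> {1..T}" "c \<omega> l \<in> Rare t" "otype (c \<omega> l) = t"
    using gcrm_nonrecurrent_request_rare[OF model \<open>\<omega> \<in> space M\<close>] by blast
  then have "X_pre (A \<omega>) (c \<omega>) l < ereal R"
    using True ttl_le by (intro fttl_hit_X_pre_less[of "A \<omega>"]) (use mono in auto)
  with t have "beta_rare (Rare t) (A \<omega>) (c \<omega>) R l = 1" by (simp add: beta_rare_def)
  moreover have "beta_rare (Rare t) (A \<omega>) (c \<omega>) R l \<le> (\<Sum>t\<in>{1..T}. beta_rare (Rare t) (A \<omega>) (c \<omega>) R l)"
    using t(1) by (intro member_le_sum) (auto simp: beta_rare_def)
  ultimately show ?thesis using True by simp
qed (auto simp: beta_rare_def intro!: sum_nonneg)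

lemma rarity_condition_windows:
  assumes "rarity_condition M T Rare A c R"
  shows "AE \<omega> in M. \<forall>t\<in>{1..T}.
           (\<lambda>m. (1 / real m) * (\<Sum>l=m..m+m. beta_rare (Rare t) (A \<omega>) (c \<omega>) R l)) \<longlonglongrightarrow> 0"
proof (rule AE_finite_allI)
  have "filterlim (\<lambda>m. real m / sqrt (real m)) at_top sequentially" by real_asymp
  then show "AE \<omega> in M. (\<lambda>m. (1 / real m) * (\<Sum>l=m..m+m. beta_rare (Rare t) (A \<omega>) (c \<omega>) R l))
               \<longlonglongrightarrow> 0" if "t \<in> {1..T}" for t
    using assms that unfolding rarity_condition_def by (elim ballE[of _ _ t] allE[of _ "\<lambda>m. m"]) auto
qed simp

theorem mainTheorem5:
  fixes M :: "'w measure" and T :: nat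
    and Krec Rare :: "nat \<Rightarrow> 'obj set" and otype lab :: "'obj \<Rightarrow> nat"
    and A :: "'w \<Rightarrow> nat \<Rightarrow> real" and Z :: "'w \<Rightarrow> nat \<Rightarrow> nat" and c :: "'w \<Rightarrow> nat \<Rightarrow> 'obj"
    and L theta thetas :: "nat \<Rightarrow> real"
  assumes model: "gcrm M T Krec Rare otype lab A Z c"
    and rare: "rarity_condition M T Rare A c (Max {\<bar>L t\<bar> | t. t \<in> {1..T}})"
    and ttl_nonneg: "\<forall>t\<in>{1..T}. 0 \<le> theta t \<and> 0 \<le> thetas t"
    and ttl_le: "\<forall>t\<in>{1..T}. theta t \<le> L t \<and> thetas t \<le> L t"
  shows "AE \<omega> in M.
           (\<lambda>n. (1 / real n) * (\<Sum>l = 1..n.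
               (if c \<omega> l \<notin> (\<Union>t\<in>{1..T}. Krec t) \<and> fttl_hit (A \<omega>) (c \<omega>) otype theta thetas l
                then 1 else 0 :: real)))
           \<longlonglongrightarrow> 0"
proof -
  define R where "R = Max {\<bar>L t\<bar> | t. t \<in> {1..T}}"
  have ttl_le_R: "max 0 (max (theta t) (thetas t)) \<le> R" if "t \<in> {1..T}" for t
  proof -
    have "\<bar>L t\<bar> \<le> R" unfolding R_def using that by (intro Max_ge) auto
    then show ?thesis using ttl_le ttl_nonneg that by force
  qed
  show ?thesis
    using AE_space gcrm_arrivals_mono[OF model] rarity_condition_windows[OF rare[folded R_def]]
  proof eventually_elim
    case (elim \<omega>)
    then show ?case
      using gcrm_rare_hit_le_sum_beta_rare[OF model elim(1,2)] ttl_le_R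
      by (intro cesaro_tendsto_zero_if_dominated[where I="{1..T}"
            and g="\<lambda>t. beta_rare (Rare t) (A \<omega>) (c \<omega>) R"]) auto
  qed
qed

end
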